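(* Let $A$ be an observable on $\mathbb C^d$ with orthonormal eigenbasis $\{\varphi_k\}_{k=0}^{d-1}$. For all unit vectors $\Phi,\Psi\in\mathbb C^d$, $$d(T_{A\Phi}\Psi,\Psi)\le d(\Psi,\Phi).$$
   Context: $\mathcal H=\mathbb C^d$ with the standard inner product; states are unit vectors. An observable $A$ is non-degenerate and identified with its orthonormal eigenbasis $\{\varphi_k\}_{k=0}^{d-1}$. Bures metric: $d(\Phi,\Psi)=\sqrt{2-2|\langle\Phi,\Psi\rangle|}$. Physical imposition operator: for a unit vector $\Phi$ (the generator state), $T_{A\Phi}\Psi=\sum_{k=0}^{d-1}|\langle\varphi_k,\Phi\rangle|\,u_k(\Psi)\,\varphi_k$, where $u_k(\Psi)=\langle\varphi_k,\Psi\rangle/|\langle\varphi_k,\Psi\rangle|$ if $\langle\varphi_k,\Psi\rangle\ne0$ and $u_k(\Psi)=1$ otherwise. Note $T_{A\Phi}\Psi$ is again a unit vector. *)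

theory Defs
  imports "HOL-Analysis.Analysis"
begin

text \<open>States live in C^d, modelled as complex ^ 'n with d = CARD('n).
  Standard inner product, conjugate-linear in the first argument.\<close>

definition cinner :: "complex ^ 'n \<Rightarrow> complex ^ 'n \<Rightarrow> complex" where
  "cinner x y = (\<Sum>i\<in>UNIV. cnj (x $ i) * y $ i)"

definition unit_vec :: "complex ^ 'n \<Rightarrow> bool" where
  "unit_vec x \<longleftrightarrow> cinner x x = 1"

definition orthonormal_basis :: "('n \<Rightarrow> complex ^ 'n) \<Rightarrow> bool" where
  "orthonormal_basis phi \<longleftrightarrow> (\<forall>j k. cinner (phi j) (phi k) = (if j = k then 1 else 0))"

definition bures :: "complex ^ 'n \<Rightarrow> complex ^ 'n \<Rightarrow> real" where
  "bures x y = sqrt (2 - 2 * cmod (cinner x y))"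

definition phase_u :: "('n \<Rightarrow> complex ^ 'n) \<Rightarrow> 'n \<Rightarrow> complex ^ 'n \<Rightarrow> complex" where
  "phase_u phi k psi =
     (if cinner (phi k) psi \<noteq> 0 then cinner (phi k) psi / complex_of_real (cmod (cinner (phi k) psi)) else 1)"

definition imposition :: "('n \<Rightarrow> complex ^ 'n) \<Rightarrow> complex ^ 'n \<Rightarrow> complex ^ 'n \<Rightarrow> complex ^ 'n" where
  "imposition phi Phi psi =
     (\<Sum>k\<in>UNIV. (complex_of_real (cmod (cinner (phi k) Phi)) * phase_u phi k psi) *s phi k)"

end

theory Submission
  imports Defs
begin

(* Write a_k = <phi_k, Phi> and b_k = <phi_k, Psi> for the coordinates of the
   generator state and of the input state in the eigenbasis of A.  The phases u_k(Psi) of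
   the imposed state are chosen exactly so that every summand of the overlap
   <T Psi, Psi> = sum_k |a_k| conj(u_k) b_k is the nonnegative real |a_k| |b_k|; hence
   |<T Psi, Psi>| = sum_k |a_k| |b_k|.  On the other hand Parseval's identity expands
   <Psi, Phi> = sum_k conj(b_k) a_k, and the triangle inequality bounds its modulus by the
   same sum.  Since the Bures distance sqrt(2 - 2|<x,y>|) decreases when the overlap
   modulus grows, the claim follows. *)

lemma cinner_sum_left:
  "cinner (\<Sum>k\<in>UNIV. c k *s (v k :: complex ^ 'n)) y = (\<Sum>k\<in>UNIV. cnj (c k) * cinner (v k) y)"
proof -
  have "cinner (\<Sum>k\<in>UNIV. c k *s v k) y = (\<Sum>i\<in>UNIV. \<Sum>k\<in>UNIV. cnj (c k) * (cnj (v k $ i) * y $ i))"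
    unfolding cinner_def by (simp add: sum_component cnj_sum sum_distrib_left sum_distrib_right mult_ac)
  also have "\<dots> = (\<Sum>k\<in>UNIV. \<Sum>i\<in>UNIV. cnj (c k) * (cnj (v k $ i) * y $ i))"
    by (rule sum.swap)
  also have "\<dots> = (\<Sum>k\<in>UNIV. cnj (c k) * cinner (v k) y)"
    unfolding cinner_def by (simp only: sum_distrib_left)
  finally show ?thesis .
qed

lemma cnj_phase_mult_coordinate:
  "cnj (phase_u phi k psi) * cinner (phi k) psi = complex_of_real (cmod (cinner (phi k) psi))"
proof (cases "cinner (phi k) psi = 0")
  case True
  then show ?thesis by (simp add: phase_u_def)
next
  case False
  let ?b = "cinner (phi k) psi"
  have "cnj ?b * ?b = complex_of_real (cmod ?b ^ 2)"
    by (metis complex_mult_cnj complex_norm_square mult.commute)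
  with False show ?thesis
    by (simp add: phase_u_def power2_eq_square field_simps)
qed

text \<open>Completeness: if the columns of a square matrix are orthonormal, so are its rows,
  because a left inverse of a square matrix is also a right inverse.\<close>

lemma orthonormal_basis_completeness:
  fixes phi :: "'n::finite \<Rightarrow> complex ^ 'n"
  assumes "orthonormal_basis phi"
  shows "(\<Sum>k\<in>UNIV. phi k $ i * cnj (phi k $ j)) = (if i = j then 1 else 0)"
proof -
  define A :: "complex^'n^'n" where "A = (\<chi> k i. cnj (phi k $ i))"
  define B :: "complex^'n^'n" where "B = (\<chi> i k. phi k $ i)"
  have "A ** B = mat 1"
    using assms unfolding orthonormal_basis_def cinner_def
    by (simp add: A_def B_def matrix_matrix_mult_def mat_def vec_eq_iff)
  then have "B ** A = mat 1"
    using matrix_left_right_inverse by blast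
  then have "(B ** A) $ i $ j = mat 1 $ i $ j"
    by simp
  then show ?thesis
    by (simp add: A_def B_def matrix_matrix_mult_def mat_def)
qed

lemma parseval:
  fixes phi :: "'n::finite \<Rightarrow> complex ^ 'n"
  assumes "orthonormal_basis phi"
  shows "cinner x y = (\<Sum>k\<in>UNIV. cnj (cinner (phi k) x) * cinner (phi k) y)"
proof -
  let ?t = "\<lambda>k i j. cnj (x $ i) * y $ j * (phi k $ i * cnj (phi k $ j))"
  have "(\<Sum>k\<in>UNIV. cnj (cinner (phi k) x) * cinner (phi k) y) = (\<Sum>k\<in>UNIV. \<Sum>i\<in>UNIV. \<Sum>j\<in>UNIV. ?t k i j)"
    unfolding cinner_def by (simp add: sum_distrib_left sum_distrib_right mult_ac)
  also have "\<dots> = (\<Sum>i\<in>UNIV. \<Sum>k\<in>UNIV. \<Sum>j\<in>UNIV. ?t k i j)"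
    by (rule sum.swap)
  also have "\<dots> = (\<Sum>i\<in>UNIV. \<Sum>j\<in>UNIV. \<Sum>k\<in>UNIV. ?t k i j)"
    by (rule sum.cong[OF refl], rule sum.swap)
  also have "\<dots> = (\<Sum>i\<in>UNIV. \<Sum>j\<in>UNIV. cnj (x $ i) * y $ j * (\<Sum>k\<in>UNIV. phi k $ i * cnj (phi k $ j)))"
    by (simp only: sum_distrib_left)
  also have "\<dots> = (\<Sum>i\<in>UNIV. cnj (x $ i) * y $ i)"
    by (simp add: orthonormal_basis_completeness[OF assms] if_distrib cong: if_cong)
  finally show ?thesis
    unfolding cinner_def by simp
qed

lemma imposition_overlap:
  "cinner (imposition phi Phi psi) psi
     = complex_of_real (\<Sum>k\<in>UNIV. cmod (cinner (phi k) Phi) * cmod (cinner (phi k) psi))"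
  unfolding imposition_def cinner_sum_left
  by (simp add: mult.assoc cnj_phase_mult_coordinate)

text \<open>By Parseval and the triangle inequality, the overlap of \<open>\<psi>\<close> and \<open>\<Phi>\<close> is bounded by the
  same coordinate sum.\<close>

lemma overlap_le_coordinate_sum:
  fixes phi :: "'n::finite \<Rightarrow> complex ^ 'n"
  assumes "orthonormal_basis phi"
  shows "cmod (cinner psi Phi) \<le> (\<Sum>k\<in>UNIV. cmod (cinner (phi k) Phi) * cmod (cinner (phi k) psi))"
proof -
  have "cmod (cinner psi Phi) \<le> (\<Sum>k\<in>UNIV. cmod (cnj (cinner (phi k) psi) * cinner (phi k) Phi))"
    unfolding parseval[OF assms, of psi Phi] by (rule norm_sum)
  then show ?thesis
    by (simp add: norm_mult mult.commute)
qed

lemma bures_antitone_overlap: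
  assumes "cmod (cinner x y) \<le> cmod (cinner u v)"
  shows "bures u v \<le> bures x y"
  using assms unfolding bures_def by (simp add: real_sqrt_le_iff)

theorem proposition2:
  fixes phi :: "'n::finite \<Rightarrow> complex ^ 'n" and Phi Psi :: "complex ^ 'n"
  assumes "orthonormal_basis phi" and "unit_vec Phi" and "unit_vec Psi"
  shows "bures (imposition phi Phi Psi) Psi \<le> bures Psi Phi"
proof (rule bures_antitone_overlap)
  let ?S = "\<Sum>k\<in>UNIV. cmod (cinner (phi k) Phi) * cmod (cinner (phi k) Psi)"
  have "cmod (cinner (imposition phi Phi Psi) Psi) = ?S"
    unfolding imposition_overlap norm_of_real by (simp add: sum_nonneg)
  with overlap_le_coordinate_sum[OF assms(1)]
  show "cmod (cinner Psi Phi) \<le> cmod (cinner (imposition phi Phi Psi) Psi)"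
    by simp
qed

end
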